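(* Let $\mathcal{P}$ be a collection of cells. Let $a=(i,j)$, $b=(k,l)$ with $i<k$, $j<l$, and $\beta=(p,q)$ with $p>k$, $q>l$, and suppose $[a,b]$ and $[\alpha,\beta]$ with $\alpha=b$ are inner intervals of $\mathcal{P}$. Put $c=(i,l)$, $d=(k,j)$, $\gamma=(k,q)$, $\delta=(p,l)$, $h=(p,j)$, $r=(i,q)$. Let $<^{\mathsf{P}}$ be a $\mathsf{P}$-order on $V(\mathcal{P})$ and suppose that the leading monomials of $f_{a,b}$ and $f_{\alpha,\beta}$ with respect to $<^{\mathsf{P}}_{\mathrm{lex}}$ are not coprime. Then $S(f_{a,b},f_{\alpha,\beta})$ reduces to $0$ modulo $\mathcal{G}$ with respect to $<^{\mathsf{P}}_{\mathrm{lex}}$ if and only if one of the following holds: (1) $x_ax_\gamma x_\delta<^{\mathsf{P}}_{\mathrm{lex}}x_\beta x_dx_c$, $[d,\delta]$ is an inner interval of $\mathcal{P}$, and ($h,\gamma<^{\mathsf{P}}\beta$ or $h,\gamma<^{\mathsf{P}}d$); (2) $x_ax_\gamma x_\delta<^{\mathsf{P}}_{\mathrm{lex}}x_\beta x_dx_c$, $[c,\gamma]$ is an inner interval of $\mathcal{P}$, and ($r,\delta<^{\mathsf{P}}\beta$ or $r,\delta<^{\mathsf{P}}c$); (3) $x_\beta x_dx_c<^{\mathsf{P}}_{\mathrm{lex}}x_ax_\gamma x_\delta$, $[c,\gamma]$ is an inner interval of $\mathcal{P}$, and ($r,d<^{\mathsf{P}}a$ or $r,d<^{\mathsf{P}}\gamma$);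 (4) $x_\beta x_dx_c<^{\mathsf{P}}_{\mathrm{lex}}x_ax_\gamma x_\delta$, $[d,\delta]$ is an inner interval of $\mathcal{P}$, and ($c,h<^{\mathsf{P}}a$ or $c,h<^{\mathsf{P}}\delta$).
   Context: For $a=(i,j), b=(k,l)\in\mathbb{Z}^2$ with $a\le b$ componentwise, the interval $[a,b]=\{(m,n)\in\mathbb{Z}^2: i\le m\le k,\ j\le n\le l\}$; it is proper if $i<k$ and $j<l$, in which case $a,b$ are its diagonal corners and $(i,l)$ (upper left), $(k,j)$ (lower right) its anti-diagonal corners. A cell is a proper interval $[v,v+(1,1)]$; its vertices are its four corners. A collection of cells $\mathcal{P}$ is a nonempty finite set of cells; $V(\mathcal{P})$ is the set of all vertices of its cells. A proper interval $[a,b]$ is an inner interval of $\mathcal{P}$ if every cell $[v,v+(1,1)]\subseteq[a,b]$ belongs to $\mathcal{P}$. Let $K$ be a field and $S=K[x_v: v\in V(\mathcal{P})]$. For an inner interval $[a,b]$ with upper left corner $c$ and lower right corner $d$, put $f_{a,b}=x_ax_b-x_cx_d$; $\mathcal{G}$ is the set of all such inner 2-minors of $\mathcal{P}$. A $\mathsf{P}$-order is a total order $<^{\mathsf{P}}$ on $V(\mathcal{P})$; $<^{\mathsf{P}}_{\mathrm{lex}}$ is the lexicographic monomial order on $S$ with $x_u<x_v\iff u<^{\mathsf{P}}v$. For vertices $u,v,w$, "$u,v<^{\mathsf{P}}w$" means $u<^{\mathsf{P}}w$ and $v<^{\mathsf{P}}w$. *)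

theory Defs
  imports Main "HOL-Library.Poly_Mapping"
begin

type_synonym vertex = "int \<times> int"
type_synonym monom = "vertex \<Rightarrow>\<^sub>0 nat"
type_synonym 'k mpoly = "monom \<Rightarrow>\<^sub>0 'k"

definition interval :: "vertex \<Rightarrow> vertex \<Rightarrow> vertex set" where
  "interval a b = {(m, n). fst a \<le> m \<and> m \<le> fst b \<and> snd a \<le> n \<and> n \<le> snd b}"

definition proper_interval :: "vertex \<Rightarrow> vertex \<Rightarrow> bool" where
  "proper_interval a b \<longleftrightarrow> fst a < fst b \<and> snd a < snd b"

definition cell :: "vertex \<Rightarrow> vertex set" where
  "cell v = interval v (fst v + 1, snd v + 1)"

definition is_cell :: "vertex set \<Rightarrow> bool" where
  "is_cell C \<longleftrightarrow> (\<exists>v. C = cell v)"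

definition collection_of_cells :: "vertex set set \<Rightarrow> bool" where
  "collection_of_cells P \<longleftrightarrow> P \<noteq> {} \<and> finite P \<and> (\<forall>C\<in>P. is_cell C)"

text \<open>The vertices of a cell [v, v+(1,1)] are exactly its four lattice points.\<close>
definition vertices :: "vertex set set \<Rightarrow> vertex set" where
  "vertices P = \<Union>P"

definition inner_interval :: "vertex set set \<Rightarrow> vertex \<Rightarrow> vertex \<Rightarrow> bool" where
  "inner_interval P a b \<longleftrightarrow> proper_interval a b \<and>
     (\<forall>v. cell v \<subseteq> interval a b \<longrightarrow> cell v \<in> P)"

definition var :: "vertex \<Rightarrow> ('k::field) mpoly" where
  "var v = Poly_Mapping.single (Poly_Mapping.single v 1) 1"

definition mon3 :: "vertex \<Rightarrow> vertex \<Rightarrow> vertex \<Rightarrow> monom" where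
  "mon3 u v w = Poly_Mapping.single u 1 + Poly_Mapping.single v 1 + Poly_Mapping.single w 1"

definition poly_in :: "vertex set \<Rightarrow> ('k::field) mpoly \<Rightarrow> bool" where
  "poly_in V f \<longleftrightarrow> (\<forall>mm\<in>Poly_Mapping.keys f. Poly_Mapping.keys mm \<subseteq> V)"

definition f_minor :: "vertex \<Rightarrow> vertex \<Rightarrow> ('k::field) mpoly" where
  "f_minor a b = var a * var b - var (fst a, snd b) * var (fst b, snd a)"

definition inner_minors :: "vertex set set \<Rightarrow> ('k::field) mpoly set" where
  "inner_minors P = {f_minor a b | a b. inner_interval P a b}"

text \<open>A P-order: a strict total order on V(P), given as a relation R where (u,v) in R means u <P v.\<close>
definition P_order :: "vertex set set \<Rightarrow> (vertex \<times> vertex) set \<Rightarrow> bool" where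
  "P_order P R \<longleftrightarrow> R \<subseteq> vertices P \<times> vertices P \<and> strict_linear_order_on (vertices P) R"

text \<open>Lexicographic order with x_u < x_v iff u <P v: m1 < m2 iff at the
  largest variable where the exponents differ, m2 has the larger exponent.\<close>
definition lex_less :: "(vertex \<times> vertex) set \<Rightarrow> monom \<Rightarrow> monom \<Rightarrow> bool" where
  "lex_less R m1 m2 \<longleftrightarrow>
     (\<exists>v. Poly_Mapping.lookup m1 v < Poly_Mapping.lookup m2 v \<and> (\<forall>w. (v, w) \<in> R \<longrightarrow> Poly_Mapping.lookup m1 w = Poly_Mapping.lookup m2 w))"

definition lex_le :: "(vertex \<times> vertex) set \<Rightarrow> monom \<Rightarrow> monom \<Rightarrow> bool" where
  "lex_le R m1 m2 \<longleftrightarrow> m1 = m2 \<or> lex_less R m1 m2"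

definition lead_monom :: "(vertex \<times> vertex) set \<Rightarrow> ('k::field) mpoly \<Rightarrow> monom" where
  "lead_monom R f = (THE m. m \<in> Poly_Mapping.keys f \<and> (\<forall>m'\<in>Poly_Mapping.keys f. m' \<noteq> m \<longrightarrow> lex_less R m' m))"

definition lead_coeff :: "(vertex \<times> vertex) set \<Rightarrow> ('k::field) mpoly \<Rightarrow> 'k" where
  "lead_coeff R f = Poly_Mapping.lookup f (lead_monom R f)"

text \<open>S-polynomial: S(f,g) = lcm/(lc(f) in(f)) f - lcm/(lc(g) in(g)) g,
  where lcm/in(f) = in(g) - in(f) and lcm/in(g) = in(f) - in(g) (truncated, pointwise).\<close>
definition spoly :: "(vertex \<times> vertex) set \<Rightarrow> ('k::field) mpoly \<Rightarrow> 'k mpoly \<Rightarrow> 'k mpoly" where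
  "spoly R f g =
     Poly_Mapping.single (lead_monom R g - lead_monom R f) (1 / lead_coeff R f) * f
   - Poly_Mapping.single (lead_monom R f - lead_monom R g) (1 / lead_coeff R g) * g"

text \<open>f reduces to 0 modulo G (Herzog--Hibi): f has a standard expression
  f = sum u_g g with remainder 0, i.e. in(u_g g) <= in(f) whenever u_g g is nonzero,
  with cofactors u_g in S.\<close>
definition reduces_to_zero ::
  "vertex set \<Rightarrow> (vertex \<times> vertex) set \<Rightarrow> ('k::field) mpoly set \<Rightarrow> 'k mpoly \<Rightarrow> bool" where
  "reduces_to_zero V R G f \<longleftrightarrow> f = 0 \<or>
     (\<exists>F u. F \<subseteq> G \<and> finite F \<and> f = (\<Sum>g\<in>F. u g * g) \<and>
        (\<forall>g\<in>F. poly_in V (u g)) \<and>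
        (\<forall>g\<in>F. u g * g \<noteq> 0 \<longrightarrow> lex_le R (lead_monom R (u g * g)) (lead_monom R f)))"

end

theory Submission
  imports Defs
begin

text \<open>
  Both leading monomials contain \<open>x\<^sub>b\<close>, so they are \<open>x\<^sub>a x\<^sub>b\<close> and
  \<open>x\<^sub>b x\<^sub>\<beta>\<close>, and the S-polynomial is the binomial
  \<open>x\<^sub>a x\<^sub>\<gamma> x\<^sub>\<delta> - x\<^sub>\<beta> x\<^sub>d x\<^sub>c\<close>.
  Leading monomials are multiplicative on binomials, \<open>in(u (x\<^sup>A - x\<^sup>B)) = in(u) x\<^sup>A\<close>
  for \<open>x\<^sup>B < x\<^sup>A\<close>, so the leading monomial of a polynomial that reduces to 0 modulo
  the inner 2-minors is divisible by the leading monomial of some inner 2-minor. The proper intervals one of whose diagonals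
  divides \<open>x\<^sub>\<beta> x\<^sub>d x\<^sub>c\<close> are \<open>[d,\<beta>]\<close>, \<open>[c,\<beta>]\<close> and \<open>[a,b]\<close>;
  those for \<open>x\<^sub>a x\<^sub>\<gamma> x\<^sub>\<delta>\<close> are \<open>[a,\<gamma>]\<close>, \<open>[a,\<delta>]\<close> and \<open>[b,\<beta>]\<close>.
  The last interval of each list does not qualify, its leading monomial being the diagonal one.
  Conversely \<open>S = x\<^sub>\<gamma> f\<^sub>a\<^sub>\<delta> - x\<^sub>c f\<^sub>d\<^sub>\<beta> = x\<^sub>\<delta> f\<^sub>a\<^sub>\<gamma> - x\<^sub>d f\<^sub>c\<^sub>\<beta>\<close>, and these are
  standard expressions as soon as the relevant one of the four minors is inner with diagonal
  leading monomial. Writing out that comparison of two quadratic monomials, and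
  \<open>[d,\<beta>] = [d,\<delta>] \<union> [b,\<beta>]\<close> etc., gives conditions (1)--(4).
\<close>

abbreviation mon1 :: "vertex \<Rightarrow> monom" where
  "mon1 v \<equiv> Poly_Mapping.single v 1"

lemma lex_less_irrefl: "\<not> lex_less R m m"
  unfolding lex_less_def by auto

lemma lex_less_add_right: "lex_less R m n \<Longrightarrow> lex_less R (m + k) (n + k)"
  unfolding lex_less_def by (auto simp: lookup_add)

lemma lex_less_add_left: "lex_less R m n \<Longrightarrow> lex_less R (k + m) (k + n)"
  unfolding lex_less_def by (auto simp: lookup_add)

lemma lex_le_add_right: "lex_le R m n \<Longrightarrow> lex_le R (m + k) (n + k)"
  unfolding lex_le_def by (auto intro: lex_less_add_right)

locale vertex_order =
  fixes V :: "vertex set" and R :: "(vertex \<times> vertex) set"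
  assumes strict_linear_order: "strict_linear_order_on V R"
begin

lemma R_irrefl: "(x, x) \<notin> R"
  using strict_linear_order unfolding strict_linear_order_on_def irrefl_def by blast

lemma R_trans: "(x, y) \<in> R \<Longrightarrow> (y, z) \<in> R \<Longrightarrow> (x, z) \<in> R"
  using strict_linear_order unfolding strict_linear_order_on_def trans_def by blast

lemma R_asym: "(x, y) \<in> R \<Longrightarrow> (y, x) \<notin> R"
  using R_irrefl R_trans by blast

lemma R_total: "x \<in> V \<Longrightarrow> y \<in> V \<Longrightarrow> x \<noteq> y \<Longrightarrow> (x, y) \<in> R \<or> (y, x) \<in> R"
  using strict_linear_order unfolding strict_linear_order_on_def total_on_def by blast

text \<open>\<open>R\<close> only orders \<open>V\<close>: comparisons decided at variables outside \<open>V\<close> need not compose.\<close>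

lemma lex_less_trans:
  assumes "Poly_Mapping.keys m2 \<subseteq> V" "Poly_Mapping.keys m3 \<subseteq> V"
    and "lex_less R m1 m2" "lex_less R m2 m3"
  shows "lex_less R m1 m3"
proof -
  obtain v1 where v1: "Poly_Mapping.lookup m1 v1 < Poly_Mapping.lookup m2 v1"
    "\<forall>w. (v1, w) \<in> R \<longrightarrow> Poly_Mapping.lookup m1 w = Poly_Mapping.lookup m2 w"
    using assms(3) unfolding lex_less_def by blast
  obtain v2 where v2: "Poly_Mapping.lookup m2 v2 < Poly_Mapping.lookup m3 v2"
    "\<forall>w. (v2, w) \<in> R \<longrightarrow> Poly_Mapping.lookup m2 w = Poly_Mapping.lookup m3 w"
    using assms(4) unfolding lex_less_def by blast
  have "v1 \<in> V" "v2 \<in> V"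
    using v1(1) v2(1) assms(1,2) by (auto simp: in_keys_iff)
  then consider "v1 = v2" | "(v1, v2) \<in> R" | "(v2, v1) \<in> R"
    using R_total by blast
  then show ?thesis
  proof cases
    case 1
    then show ?thesis
      using v1 v2 unfolding lex_less_def by (intro exI[of _ v1]) auto
  next
    case 2
    show ?thesis
      unfolding lex_less_def
    proof (intro exI[of _ v2] conjI allI impI)
      show "Poly_Mapping.lookup m1 v2 < Poly_Mapping.lookup m3 v2"
        using v1(2)[rule_format, OF 2] v2(1) by simp
      fix w assume "(v2, w) \<in> R"
      then show "Poly_Mapping.lookup m1 w = Poly_Mapping.lookup m3 w"
        using v1(2)[rule_format, OF R_trans[OF 2]] v2(2)[rule_format] by simp
    qed
  next
    case 3
    show ?thesis
      unfolding lex_less_def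
    proof (intro exI[of _ v1] conjI allI impI)
      show "Poly_Mapping.lookup m1 v1 < Poly_Mapping.lookup m3 v1"
        using v2(2)[rule_format, OF 3] v1(1) by simp
      fix w assume "(v1, w) \<in> R"
      then show "Poly_Mapping.lookup m1 w = Poly_Mapping.lookup m3 w"
        using v2(2)[rule_format, OF R_trans[OF 3]] v1(2)[rule_format] by simp
    qed
  qed
qed

lemma lex_less_asym:
  "Poly_Mapping.keys m \<subseteq> V \<Longrightarrow> Poly_Mapping.keys n \<subseteq> V \<Longrightarrow> lex_less R m n \<Longrightarrow> \<not> lex_less R n m"
  using lex_less_trans[of m n] lex_less_irrefl by blast

lemma lex_less_total:
  assumes "Poly_Mapping.keys m \<subseteq> V" "Poly_Mapping.keys n \<subseteq> V" "m \<noteq> n"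
  shows "lex_less R m n \<or> lex_less R n m"
proof -
  define D where "D = {v. Poly_Mapping.lookup m v \<noteq> Poly_Mapping.lookup n v}"
  have "D \<noteq> {}"
    using assms(3) poly_mapping_eqI[of m n] unfolding D_def by blast
  moreover have "finite D"
    by (rule finite_subset[of _ "Poly_Mapping.keys m \<union> Poly_Mapping.keys n"])
      (auto simp: D_def in_keys_iff)
  moreover have "asymp_on D (\<lambda>x y. (x, y) \<in> R)" "transp_on D (\<lambda>x y. (x, y) \<in> R)"
    unfolding asymp_on_def transp_on_def using R_asym R_trans by blast+
  ultimately obtain v where v: "v \<in> D" "\<forall>w \<in> D. w \<noteq> v \<longrightarrow> (v, w) \<notin> R"
    using Finite_Set.bex_max_element[of D] by blast
  have "\<forall>w. (v, w) \<in> R \<longrightarrow> Poly_Mapping.lookup m w = Poly_Mapping.lookup n w"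
  proof (intro allI impI)
    fix w assume "(v, w) \<in> R"
    then have "w \<notin> D"
      using v(2) R_irrefl by metis
    then show "Poly_Mapping.lookup m w = Poly_Mapping.lookup n w"
      unfolding D_def by blast
  qed
  moreover have "Poly_Mapping.lookup m v < Poly_Mapping.lookup n v \<or>
    Poly_Mapping.lookup n v < Poly_Mapping.lookup m v"
    using v(1) unfolding D_def by auto
  ultimately show ?thesis
    unfolding lex_less_def by metis
qed

lemma lex_le_less_trans:
  "Poly_Mapping.keys m2 \<subseteq> V \<Longrightarrow> Poly_Mapping.keys m3 \<subseteq> V \<Longrightarrow>
    lex_le R m1 m2 \<Longrightarrow> lex_less R m2 m3 \<Longrightarrow> lex_less R m1 m3"
  unfolding lex_le_def using lex_less_trans by blast

lemma lex_le_antisym: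
  "Poly_Mapping.keys m \<subseteq> V \<Longrightarrow> Poly_Mapping.keys n \<subseteq> V \<Longrightarrow>
    lex_le R m n \<Longrightarrow> lex_le R n m \<Longrightarrow> m = n"
  unfolding lex_le_def using lex_less_asym by blast

lemma lex_less_mon1_add_iff:
  assumes V: "u \<in> V" "w \<in> V" "x \<in> V" "y \<in> V" and distinct: "distinct [u, w, x, y]"
  shows "lex_less R (mon1 u + mon1 w) (mon1 x + mon1 y) \<longleftrightarrow>
    ((u, x) \<in> R \<and> (w, x) \<in> R) \<or> ((u, y) \<in> R \<and> (w, y) \<in> R)"
proof
  assume "lex_less R (mon1 u + mon1 w) (mon1 x + mon1 y)"
  then obtain v
    where v: "Poly_Mapping.lookup (mon1 u + mon1 w) v < Poly_Mapping.lookup (mon1 x + mon1 y) v"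
    and above_v: "\<And>z. (v, z) \<in> R \<Longrightarrow>
      Poly_Mapping.lookup (mon1 u + mon1 w) z = Poly_Mapping.lookup (mon1 x + mon1 y) z"
    unfolding lex_less_def by blast
  have "v = x \<or> v = y" "v \<noteq> u" "v \<noteq> w"
    using v distinct by (auto simp: lookup_add lookup_single when_def split: if_splits)
  moreover have "(v, u) \<notin> R" "(v, w) \<notin> R"
    using above_v[of u] above_v[of w] distinct by (auto simp: lookup_add lookup_single when_def)
  ultimately show "((u, x) \<in> R \<and> (w, x) \<in> R) \<or> ((u, y) \<in> R \<and> (w, y) \<in> R)"
    using R_total V by blast
next
  assume "((u, x) \<in> R \<and> (w, x) \<in> R) \<or> ((u, y) \<in> R \<and> (w, y) \<in> R)"
  moreover have "(x, y) \<in> R \<or> (y, x) \<in> R"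
    using R_total V distinct by simp
  ultimately obtain v where v: "v = x \<or> v = y" "(u, v) \<in> R" "(w, v) \<in> R"
    and top: "(x, v) \<in> R \<or> x = v" "(y, v) \<in> R \<or> y = v"
    using R_trans by blast
  have "Poly_Mapping.lookup (mon1 u + mon1 w) z = Poly_Mapping.lookup (mon1 x + mon1 y) z"
    if "(v, z) \<in> R" for z
  proof -
    have "z \<notin> {u, w, x, y}"
      using that v top R_asym R_trans R_irrefl by blast
    then show ?thesis
      by (auto simp: lookup_add lookup_single when_def)
  qed
  moreover have "Poly_Mapping.lookup (mon1 u + mon1 w) v < Poly_Mapping.lookup (mon1 x + mon1 y) v"
    using v(1) v(2,3)[THEN R_asym] R_irrefl distinct
    by (auto simp: lookup_add lookup_single when_def)
  ultimately show "lex_less R (mon1 u + mon1 w) (mon1 x + mon1 y)"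
    unfolding lex_less_def by blast
qed

lemma lead_monom_eqI:
  assumes "poly_in V f" "m \<in> Poly_Mapping.keys f"
    and "\<And>m'. m' \<in> Poly_Mapping.keys f \<Longrightarrow> m' \<noteq> m \<Longrightarrow> lex_less R m' m"
  shows "lead_monom R f = m"
  unfolding lead_monom_def
proof (rule the_equality)
  fix n assume n: "n \<in> Poly_Mapping.keys f \<and> (\<forall>m'\<in>Poly_Mapping.keys f. m' \<noteq> n \<longrightarrow> lex_less R m' n)"
  show "n = m"
  proof (rule ccontr)
    assume "n \<noteq> m"
    then have "lex_less R n m" "lex_less R m n"
      using n assms(2,3) by auto
    moreover have "Poly_Mapping.keys n \<subseteq> V" "Poly_Mapping.keys m \<subseteq> V"
      using n assms(1,2) unfolding poly_in_def by auto
    ultimately show False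
      using lex_less_asym by blast
  qed
qed (use assms in blast)

lemma lead_monom_greatest:
  assumes "poly_in V f" "f \<noteq> 0"
  shows "lead_monom R f \<in> Poly_Mapping.keys f"
    and "\<And>m. m \<in> Poly_Mapping.keys f \<Longrightarrow> lex_le R m (lead_monom R f)"
proof -
  have "transp_on (Poly_Mapping.keys f) (lex_less R)" "totalp_on (Poly_Mapping.keys f) (lex_less R)"
    using assms(1) lex_less_trans lex_less_total unfolding poly_in_def transp_on_def totalp_on_def
    by blast+
  then obtain m where m: "m \<in> Poly_Mapping.keys f"
    "\<forall>m'\<in>Poly_Mapping.keys f. m' \<noteq> m \<longrightarrow> lex_less R m' m"
    using Finite_Set.bex_greatest_element[of "Poly_Mapping.keys f" "lex_less R"] assms(2) by auto
  then have "lead_monom R f = m"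
    using lead_monom_eqI[OF assms(1)] by blast
  then show "lead_monom R f \<in> Poly_Mapping.keys f"
    "\<And>m'. m' \<in> Poly_Mapping.keys f \<Longrightarrow> lex_le R m' (lead_monom R f)"
    using m unfolding lex_le_def by auto
qed

lemma lead_monom_lex_le:
  assumes "poly_in V f" "f \<noteq> 0" "\<And>m. m \<in> Poly_Mapping.keys f \<Longrightarrow> lex_le R m T"
  shows "lex_le R (lead_monom R f) T"
  using lead_monom_greatest(1)[OF assms(1,2)] assms(3) by blast

end

lemma poly_in_add: "poly_in V f \<Longrightarrow> poly_in V g \<Longrightarrow> poly_in V (f + g)"
  unfolding poly_in_def using keys_add[of f g] by blast

lemma poly_in_uminus: "poly_in V f \<Longrightarrow> poly_in V (- f)"
  unfolding poly_in_def by simp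

lemma poly_in_mult:
  assumes "poly_in V f" "poly_in V g"
  shows "poly_in V (f * g)"
  unfolding poly_in_def
proof
  fix m assume "m \<in> Poly_Mapping.keys (f * g)"
  then obtain m1 m2 where "m = m1 + m2" "m1 \<in> Poly_Mapping.keys f" "m2 \<in> Poly_Mapping.keys g"
    using keys_mult[of f g] by blast
  then show "Poly_Mapping.keys m \<subseteq> V"
    using assms keys_add[of m1 m2] unfolding poly_in_def by blast
qed

lemma poly_in_single: "Poly_Mapping.keys m \<subseteq> V \<Longrightarrow> poly_in V (Poly_Mapping.single m c)"
  unfolding poly_in_def by simp

lemma poly_in_var: "x \<in> V \<Longrightarrow> poly_in V (var x)"
  unfolding var_def by (simp add: poly_in_single)

lemma poly_in_binomial:
  "Poly_Mapping.keys A \<subseteq> V \<Longrightarrow> Poly_Mapping.keys B \<subseteq> V \<Longrightarrow>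
    poly_in V (Poly_Mapping.single A c - Poly_Mapping.single B d)"
  unfolding poly_in_def
  using keys_diff[of "Poly_Mapping.single A c" "Poly_Mapping.single B d"] by (auto split: if_splits)

lemma keys_binomial_subset:
  "Poly_Mapping.keys (Poly_Mapping.single A (1::'k::field) - Poly_Mapping.single B 1) \<subseteq> {A, B}"
  by (auto simp: in_keys_iff lookup_minus lookup_single when_def split: if_splits)

lemma keys_binomial:
  "A \<noteq> B \<Longrightarrow>
    Poly_Mapping.keys (Poly_Mapping.single A (1::'k::field) - Poly_Mapping.single B 1) = {A, B}"
  by (auto simp: in_keys_iff lookup_minus lookup_single when_def split: if_splits)

lemma keys_mon1_add: "Poly_Mapping.keys (mon1 x + mon1 y) = {x, y}"
  by (auto simp: in_keys_iff lookup_add lookup_single when_def split: if_splits)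

lemma keys_mon3: "Poly_Mapping.keys (mon3 x y z) = {x, y, z}"
  by (auto simp: mon3_def in_keys_iff lookup_add lookup_single when_def split: if_splits)

lemma mon3_divisor_vars:
  assumes "mon3 x y z = m + mon1 u + mon1 v"
  shows "u \<in> {x, y, z}" "v \<in> {x, y, z}"
proof -
  have "Poly_Mapping.lookup (mon3 x y z) u \<noteq> 0" "Poly_Mapping.lookup (mon3 x y z) v \<noteq> 0"
    unfolding assms by (simp_all add: lookup_add)
  then show "u \<in> {x, y, z}" "v \<in> {x, y, z}"
    unfolding mon3_def by (auto simp: lookup_add lookup_single when_def split: if_splits)
qed

lemma lookup_mult_single:
  "Poly_Mapping.lookup (p * Poly_Mapping.single t (1::'k::field)) (s + t) =
    Poly_Mapping.lookup p (s :: monom)"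
proof -
  have shift: "(\<Sum>q. Poly_Mapping.lookup (Poly_Mapping.single t (1::'k)) q when s + t = m + q)
      = (1 when m = s)" for m
  proof -
    have "(\<lambda>q. Poly_Mapping.lookup (Poly_Mapping.single t (1::'k)) q when s + t = m + q)
        = (\<lambda>q. ((1::'k) when m = s) when t = q)"
      by (auto simp: lookup_single when_def fun_eq_iff)
    then show ?thesis
      by (simp only: Sum_any_when_equal')
  qed
  have "Poly_Mapping.lookup (p * Poly_Mapping.single t 1) (s + t)
      = (\<Sum>m. Poly_Mapping.lookup p m * (1 when m = s))"
    by (simp only: lookup_mult shift)
  also have "\<dots> = Poly_Mapping.lookup p s"
    by (simp only: mult_when mult_1_right Sum_any_when_equal)
  finally show ?thesis .
qed

lemma keys_mult_single:
  "Poly_Mapping.keys (p * Poly_Mapping.single t (1::'k::field)) \<subseteq>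
    (\<lambda>m. m + t) ` Poly_Mapping.keys (p :: 'k mpoly)"
  using keys_mult[of p "Poly_Mapping.single t (1::'k)"] by auto

context vertex_order
begin

lemma lead_monom_mult_binomial:
  fixes u :: "'k::field mpoly"
  assumes u: "poly_in V u" "u \<noteq> 0"
    and AB: "Poly_Mapping.keys A \<subseteq> V" "Poly_Mapping.keys B \<subseteq> V" "lex_less R B A"
  shows "lead_monom R (u * (Poly_Mapping.single A 1 - Poly_Mapping.single B 1)) =
    lead_monom R u + A"
proof -
  define M where "M = lead_monom R u"
  define w where "w = u * (Poly_Mapping.single A (1::'k) - Poly_Mapping.single B 1)"
  have w_eq: "w = u * Poly_Mapping.single A 1 - u * Poly_Mapping.single B 1"
    unfolding w_def by (rule right_diff_distrib)
  have M: "M \<in> Poly_Mapping.keys u" "\<And>m. m \<in> Poly_Mapping.keys u \<Longrightarrow> lex_le R m M"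
    unfolding M_def using lead_monom_greatest[OF u] by blast+
  have keys_u: "Poly_Mapping.keys m \<subseteq> V" if "m \<in> Poly_Mapping.keys u" for m
    using u(1) that unfolding poly_in_def by blast
  have MA_V: "Poly_Mapping.keys (M + A) \<subseteq> V" and MB_V: "Poly_Mapping.keys (M + B) \<subseteq> V"
    using keys_add[of M A] keys_add[of M B] keys_u[OF M(1)] AB(1,2) by blast+
  have below_MA: "lex_less R (m + B) (M + A)" if "m \<in> Poly_Mapping.keys u" for m
  proof (rule lex_le_less_trans[OF MB_V MA_V])
    show "lex_le R (m + B) (M + B)"
      using M(2)[OF that] by (rule lex_le_add_right)
    show "lex_less R (M + B) (M + A)"
      using AB(3) by (rule lex_less_add_left)
  qed
  have "M + A \<notin> Poly_Mapping.keys (u * Poly_Mapping.single B 1)"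
  proof
    assume "M + A \<in> Poly_Mapping.keys (u * Poly_Mapping.single B 1)"
    then obtain m where m: "m \<in> Poly_Mapping.keys u" "M + A = m + B"
      using keys_mult_single[of u B] by blast
    then show False
      using below_MA[OF m(1)] lex_less_irrefl by simp
  qed
  then have "Poly_Mapping.lookup w (M + A) = Poly_Mapping.lookup u M"
    unfolding w_eq by (simp add: lookup_minus lookup_mult_single in_keys_iff)
  then have MA_w: "M + A \<in> Poly_Mapping.keys w"
    using M(1) by (simp add: in_keys_iff)
  have less_MA: "lex_less R m (M + A)"
    if m_w: "m \<in> Poly_Mapping.keys w" and m_ne: "m \<noteq> M + A" for m
  proof -
    have "Poly_Mapping.keys w \<subseteq>
        (\<lambda>m. m + A) ` Poly_Mapping.keys u \<union> (\<lambda>m. m + B) ` Poly_Mapping.keys u"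
      unfolding w_eq
      using keys_diff[of "u * Poly_Mapping.single A 1" "u * Poly_Mapping.single B 1"]
        keys_mult_single[of u A] keys_mult_single[of u B] by blast
    then obtain k where k: "k \<in> Poly_Mapping.keys u" "m = k + A \<or> m = k + B"
      using m_w by blast
    show ?thesis
    proof (cases "m = k + A")
      case True
      then have "lex_less R k M"
        using M(2)[OF k(1)] m_ne unfolding lex_le_def by blast
      then show ?thesis
        using True by (simp add: lex_less_add_right)
    next
      case False
      then show ?thesis
        using k below_MA by blast
    qed
  qed
  have "poly_in V w"
    unfolding w_def using u(1) AB(1,2) by (intro poly_in_mult poly_in_binomial)
  then have "lead_monom R w = M + A"
    using MA_w less_MA by (rule lead_monom_eqI)
  then show ?thesis
    unfolding w_def M_def .
qed

lemma lead_monom_eq_of_reduces_to_zero: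
  fixes f :: "'k::field mpoly"
  assumes red: "reduces_to_zero V R G f" and f: "f \<noteq> 0" "poly_in V f"
    and G: "\<forall>g\<in>G. poly_in V g"
  shows "\<exists>g\<in>G. \<exists>u. poly_in V u \<and> u * g \<noteq> 0 \<and> lead_monom R (u * g) = lead_monom R f"
proof -
  obtain F u where F: "F \<subseteq> G" "f = (\<Sum>g\<in>F. u g * g)" "\<forall>g\<in>F. poly_in V (u g)"
    and bound: "\<forall>g\<in>F. u g * g \<noteq> 0 \<longrightarrow> lex_le R (lead_monom R (u g * g)) (lead_monom R f)"
    using red f(1) unfolding reduces_to_zero_def by blast
  define T where "T = lead_monom R f"
  have T: "T \<in> Poly_Mapping.keys f"
    unfolding T_def using lead_monom_greatest(1)[OF f(2,1)] .
  have "(\<Sum>g\<in>F. Poly_Mapping.lookup (u g * g) T) \<noteq> 0"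
    using T F(2) by (simp add: in_keys_iff lookup_sum)
  then obtain g where g: "g \<in> F" "T \<in> Poly_Mapping.keys (u g * g)"
    by (metis (mono_tags, lifting) in_keys_iff sum.neutral)
  have ug: "poly_in V (u g * g)"
    using F(1,3) G g(1) by (blast intro: poly_in_mult)
  have ug_ne: "u g * g \<noteq> 0"
    using g(2) by auto
  have "lead_monom R (u g * g) = T"
  proof (rule lex_le_antisym)
    show "lex_le R (lead_monom R (u g * g)) T"
      using bound g(1) ug_ne unfolding T_def by blast
    show "lex_le R T (lead_monom R (u g * g))"
      using lead_monom_greatest(2)[OF ug ug_ne g(2)] .
    show "Poly_Mapping.keys (lead_monom R (u g * g)) \<subseteq> V"
      using ug lead_monom_greatest(1)[OF ug ug_ne] unfolding poly_in_def by blast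
    show "Poly_Mapping.keys T \<subseteq> V"
      using f(2) T unfolding poly_in_def by blast
  qed
  then show ?thesis
    using F(1,3) g(1) ug_ne unfolding T_def by blast
qed

lemma reduces_to_zero_two_terms:
  fixes f :: "'k::field mpoly"
  assumes G: "g1 \<in> G" "g2 \<in> G" and g: "poly_in V g1" "poly_in V g2"
    and u: "poly_in V u1" "poly_in V u2" and f: "f = u1 * g1 + u2 * g2"
    and bound: "\<And>m. m \<in> Poly_Mapping.keys (u1 * g1) \<union> Poly_Mapping.keys (u2 * g2) \<Longrightarrow>
      lex_le R m (lead_monom R f)"
  shows "reduces_to_zero V R G f"
proof -
  let ?K = "Poly_Mapping.keys (u1 * g1) \<union> Poly_Mapping.keys (u2 * g2)"
  obtain F u where F: "F \<subseteq> {g1, g2}" "f = (\<Sum>g\<in>F. u g * g)" "\<forall>g\<in>F. poly_in V (u g)"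
    and keys_F: "\<forall>g\<in>F. Poly_Mapping.keys (u g * g) \<subseteq> ?K"
  proof (cases "g1 = g2")
    case True
    have "Poly_Mapping.keys ((u1 + u2) * g1) \<subseteq> ?K"
      using keys_add[of "u1 * g1" "u2 * g1"] True by (simp add: distrib_right)
    then show ?thesis
      using that[of "{g1}" "\<lambda>_. u1 + u2"] f u True by (simp add: distrib_right poly_in_add)
  next
    case False
    then show ?thesis
      using that[of "{g1, g2}" "\<lambda>g. if g = g1 then u1 else u2"] f u by auto
  qed
  have "lex_le R (lead_monom R (u g * g)) (lead_monom R f)" if "g \<in> F" "u g * g \<noteq> 0" for g
  proof (rule lead_monom_lex_le[OF _ that(2)])
    show "poly_in V (u g * g)"
      using F(1,3) g u that(1) by (blast intro: poly_in_mult)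
    show "lex_le R m (lead_monom R f)" if "m \<in> Poly_Mapping.keys (u g * g)" for m
      using keys_F bound \<open>g \<in> F\<close> that by blast
  qed
  moreover have "F \<subseteq> G" "finite F"
    using F(1) G finite_subset by auto
  ultimately show ?thesis
    unfolding reduces_to_zero_def using F(2,3) by blast
qed

end

lemma cell_subset_interval_iff:
  "cell (x, y) \<subseteq> interval u w \<longleftrightarrow> fst u \<le> x \<and> x + 1 \<le> fst w \<and> snd u \<le> y \<and> y + 1 \<le> snd w"
proof
  assume sub: "cell (x, y) \<subseteq> interval u w"
  have "(x, y) \<in> cell (x, y)" "(x + 1, y + 1) \<in> cell (x, y)"
    unfolding cell_def interval_def by auto
  then show "fst u \<le> x \<and> x + 1 \<le> fst w \<and> snd u \<le> y \<and> y + 1 \<le> snd w"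
    using sub unfolding interval_def by auto
qed (auto simp: cell_def interval_def)

lemma inner_interval_iff:
  "inner_interval P u w \<longleftrightarrow> fst u < fst w \<and> snd u < snd w \<and>
     (\<forall>x y. fst u \<le> x \<and> x < fst w \<and> snd u \<le> y \<and> y < snd w \<longrightarrow> cell (x, y) \<in> P)"
  unfolding inner_interval_def proper_interval_def by (auto simp: cell_subset_interval_iff)

lemma inner_interval_vertex:
  assumes "inner_interval P u w" "fst u \<le> fst z" "fst z \<le> fst w" "snd u \<le> snd z" "snd z \<le> snd w"
  shows "z \<in> vertices P"
proof -
  obtain z1 z2 where z: "z = (z1, z2)"
    by (cases z)
  define x where "x = (if z1 < fst w then z1 else z1 - 1)"
  define y where "y = (if z2 < snd w then z2 else z2 - 1)"
  have "cell (x, y) \<in> P"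
    using assms unfolding inner_interval_iff x_def y_def z by auto
  moreover have "z \<in> cell (x, y)"
    unfolding cell_def interval_def x_def y_def z by auto
  ultimately show ?thesis
    unfolding vertices_def by blast
qed

lemma inner_interval_corners:
  assumes "inner_interval P s t"
  shows "s \<in> vertices P" "t \<in> vertices P"
    and "(fst s, snd t) \<in> vertices P" "(fst t, snd s) \<in> vertices P"
  using assms inner_interval_vertex[OF assms] unfolding inner_interval_iff by auto

lemma inner_interval_split_horizontal:
  "x0 < x1 \<Longrightarrow> x1 < x2 \<Longrightarrow>
    inner_interval P (x0, y0) (x2, y1) \<longleftrightarrow>
      inner_interval P (x0, y0) (x1, y1) \<and> inner_interval P (x1, y0) (x2, y1)"
  unfolding inner_interval_iff by (auto, meson linorder_not_le)

lemma inner_interval_split_vertical: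
  "y0 < y1 \<Longrightarrow> y1 < y2 \<Longrightarrow>
    inner_interval P (x0, y0) (x1, y2) \<longleftrightarrow>
      inner_interval P (x0, y0) (x1, y1) \<and> inner_interval P (x0, y1) (x1, y2)"
  unfolding inner_interval_iff by (auto, meson linorder_not_le)

abbreviation diag_monom :: "vertex \<Rightarrow> vertex \<Rightarrow> monom" where
  "diag_monom s t \<equiv> mon1 s + mon1 t"

abbreviation antidiag_monom :: "vertex \<Rightarrow> vertex \<Rightarrow> monom" where
  "antidiag_monom s t \<equiv> mon1 (fst s, snd t) + mon1 (fst t, snd s)"

definition inner_diag_leading ::
    "vertex set set \<Rightarrow> (vertex \<times> vertex) set \<Rightarrow> vertex \<Rightarrow> vertex \<Rightarrow> bool" where
  "inner_diag_leading P R s t \<longleftrightarrow>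
    inner_interval P s t \<and> lex_less R (antidiag_monom s t) (diag_monom s t)"

lemma var_mult_var: "(var x :: 'k::field mpoly) * var y = Poly_Mapping.single (mon1 x + mon1 y) 1"
  by (simp add: var_def mult_single)

lemma var_mult_var_var:
  "(var x :: 'k::field mpoly) * var y * var z = Poly_Mapping.single (mon3 x y z) 1"
  by (simp add: var_def mult_single mon3_def)

lemma f_minor_eq:
  "(f_minor s t :: 'k::field mpoly) =
    Poly_Mapping.single (diag_monom s t) 1 - Poly_Mapping.single (antidiag_monom s t) 1"
  by (simp add: f_minor_def var_mult_var)

lemma keys_var_mult_f_minor:
  "Poly_Mapping.keys (var x * f_minor s t :: 'k::field mpoly) \<subseteq>
    {mon1 x + diag_monom s t, mon1 x + antidiag_monom s t}"
proof -
  have "(var x :: 'k mpoly) * f_minor s t =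
      Poly_Mapping.single (mon1 x + diag_monom s t) 1 -
      Poly_Mapping.single (mon1 x + antidiag_monom s t) 1"
    unfolding f_minor_eq var_def by (simp add: right_diff_distrib mult_single)
  then show ?thesis
    using keys_binomial_subset by metis
qed

lemma diag_monom_neq_antidiag_monom:
  assumes "proper_interval s t"
  shows "diag_monom s t \<noteq> antidiag_monom s t"
proof -
  have "s \<notin> {(fst s, snd t), (fst t, snd s)}"
    using assms unfolding proper_interval_def by (cases s) auto
  then show ?thesis
    by (metis insertI1 keys_mon1_add)
qed

lemma keys_diag_antidiag_monom:
  assumes "inner_interval P s t"
  shows "Poly_Mapping.keys (diag_monom s t) \<subseteq> vertices P"
    and "Poly_Mapping.keys (antidiag_monom s t) \<subseteq> vertices P"
  unfolding keys_mon1_add using inner_interval_corners[OF assms] by simp_all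

lemma poly_in_f_minor: "inner_interval P s t \<Longrightarrow> poly_in (vertices P) (f_minor s t)"
  unfolding f_minor_eq by (intro poly_in_binomial keys_diag_antidiag_monom)

locale cell_order = vertex_order "vertices P" R for P :: "vertex set set" and R
begin

lemma lead_monom_f_minor:
  assumes "inner_interval P s t"
  shows "lex_less R (antidiag_monom s t) (diag_monom s t) \<and>
      lead_monom R (f_minor s t :: 'k::field mpoly) = diag_monom s t \<or>
    lex_less R (diag_monom s t) (antidiag_monom s t) \<and>
      lead_monom R (f_minor s t :: 'k mpoly) = antidiag_monom s t"
proof -
  have ne: "diag_monom s t \<noteq> antidiag_monom s t"
    using assms unfolding inner_interval_def by (intro diag_monom_neq_antidiag_monom) simp
  have keys: "Poly_Mapping.keys (f_minor s t :: 'k mpoly) = {diag_monom s t, antidiag_monom s t}"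
    unfolding f_minor_eq using ne by (rule keys_binomial)
  have poly: "poly_in (vertices P) (f_minor s t :: 'k mpoly)"
    using assms by (rule poly_in_f_minor)
  show ?thesis
    using lex_less_total[OF keys_diag_antidiag_monom[OF assms] ne]
      lead_monom_eqI[OF poly] keys by auto
qed

lemma lead_monom_dvd_of_reduces_to_zero:
  fixes f :: "'k::field mpoly"
  assumes "reduces_to_zero (vertices P) R (inner_minors P) f" "f \<noteq> 0" "poly_in (vertices P) f"
  obtains s t m
  where "inner_interval P s t" "lead_monom R f = m + lead_monom R (f_minor s t :: 'k mpoly)"
proof -
  have minors: "\<forall>g \<in> inner_minors P. poly_in (vertices P) (g :: 'k mpoly)"
    unfolding inner_minors_def using poly_in_f_minor by blast
  obtain g u :: "'k mpoly" where g: "g \<in> inner_minors P" "poly_in (vertices P) u" "u * g \<noteq> 0"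
    "lead_monom R (u * g) = lead_monom R f"
    using lead_monom_eq_of_reduces_to_zero[OF assms minors] by blast
  obtain s t where st: "g = f_minor s t" "inner_interval P s t"
    using g(1) unfolding inner_minors_def by blast
  note keys_st = keys_diag_antidiag_monom[OF st(2)]
  have "u \<noteq> 0" "- u \<noteq> 0"
    using g(3) by auto
  from lead_monom_f_minor[OF st(2), where 'k='k] show ?thesis
  proof
    assume diag: "lex_less R (antidiag_monom s t) (diag_monom s t) \<and>
      lead_monom R (f_minor s t :: 'k mpoly) = diag_monom s t"
    have "lead_monom R (u * g) = lead_monom R u + diag_monom s t"
      unfolding st(1) f_minor_eq
      using lead_monom_mult_binomial[OF g(2) \<open>u \<noteq> 0\<close> keys_st diag[THEN conjunct1]] .
    then show ?thesis
      using that[of s t "lead_monom R u"] st(2) g(4) diag by simp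
  next
    assume antidiag: "lex_less R (diag_monom s t) (antidiag_monom s t) \<and>
      lead_monom R (f_minor s t :: 'k mpoly) = antidiag_monom s t"
    have "u * g =
        - u * (Poly_Mapping.single (antidiag_monom s t) 1 - Poly_Mapping.single (diag_monom s t) 1)"
      unfolding st(1) f_minor_eq by (simp add: algebra_simps)
    then have "lead_monom R (u * g) = lead_monom R (- u) + antidiag_monom s t"
      using lead_monom_mult_binomial[OF poly_in_uminus[OF g(2)] \<open>- u \<noteq> 0\<close> keys_st(2,1)
          antidiag[THEN conjunct1]] by simp
    then show ?thesis
      using that[of s t "lead_monom R (- u)"] st(2) g(4) antidiag by simp
  qed
qed

lemma reduces_to_zero_var_minors:
  fixes f :: "'k::field mpoly"
  assumes f: "f = var x * f_minor s t - var y * f_minor s' t'"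
    and inner: "inner_interval P s t" "inner_interval P s' t'"
    and xy: "x \<in> vertices P" "y \<in> vertices P"
    and bound: "\<And>n. n \<in> {mon1 x + diag_monom s t, mon1 x + antidiag_monom s t,
      mon1 y + diag_monom s' t', mon1 y + antidiag_monom s' t'} \<Longrightarrow> lex_le R n (lead_monom R f)"
  shows "reduces_to_zero (vertices P) R (inner_minors P) f"
proof (rule reduces_to_zero_two_terms)
  show "f_minor s t \<in> inner_minors P" "f_minor s' t' \<in> inner_minors P"
    unfolding inner_minors_def using inner by blast+
  show "poly_in (vertices P) (f_minor s t)" "poly_in (vertices P) (f_minor s' t')"
    using inner by (simp_all add: poly_in_f_minor)
  show "poly_in (vertices P) (var x)" "poly_in (vertices P) (- var y)"
    using xy by (simp_all add: poly_in_var poly_in_uminus)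
  show "f = var x * f_minor s t + - var y * f_minor s' t'"
    using f by simp
  fix n
  assume "n \<in> Poly_Mapping.keys (var x * f_minor s t) \<union> Poly_Mapping.keys (- var y * f_minor s' t')"
  then have "n \<in> {mon1 x + diag_monom s t, mon1 x + antidiag_monom s t,
      mon1 y + diag_monom s' t', mon1 y + antidiag_monom s' t'}"
    using keys_var_mult_f_minor[of x s t] keys_var_mult_f_minor[of y s' t'] by auto
  then show "lex_le R n (lead_monom R f)"
    by (rule bound)
qed

lemma inner_diag_leading_iff:
  "inner_diag_leading P R s t \<longleftrightarrow> inner_interval P s t \<and>
    ((((fst s, snd t), s) \<in> R \<and> ((fst t, snd s), s) \<in> R) \<or>
     (((fst s, snd t), t) \<in> R \<and> ((fst t, snd s), t) \<in> R))"
proof (cases "inner_interval P s t")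
  case True
  have "distinct [(fst s, snd t), (fst t, snd s), s, t]"
    using True unfolding inner_interval_iff by (cases s, cases t) auto
  then show ?thesis
    unfolding inner_diag_leading_def
    using lex_less_mon1_add_iff inner_interval_corners[OF True] by (simp add: add.commute)
qed (simp add: inner_diag_leading_def)

lemma diag_leading_of_not_coprime:
  fixes i j k l p q :: int
  assumes "i < k" "j < l" "k < p" "l < q"
    and "inner_interval P (i, j) (k, l)" "inner_interval P (k, l) (p, q)"
    and "Poly_Mapping.keys (lead_monom R (f_minor (i, j) (k, l) :: 'k::field mpoly))
      \<inter> Poly_Mapping.keys (lead_monom R (f_minor (k, l) (p, q) :: 'k mpoly)) \<noteq> {}"
  shows "lex_less R (antidiag_monom (i, j) (k, l)) (diag_monom (i, j) (k, l))"
    and "lex_less R (antidiag_monom (k, l) (p, q)) (diag_monom (k, l) (p, q))"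
proof -
  have disjoint:
    "Poly_Mapping.keys (antidiag_monom (i, j) (k, l)) \<inter>
      Poly_Mapping.keys (diag_monom (k, l) (p, q)) = {}"
    "Poly_Mapping.keys (diag_monom (i, j) (k, l)) \<inter>
      Poly_Mapping.keys (antidiag_monom (k, l) (p, q)) = {}"
    "Poly_Mapping.keys (antidiag_monom (i, j) (k, l)) \<inter>
      Poly_Mapping.keys (antidiag_monom (k, l) (p, q)) = {}"
    unfolding keys_mon1_add using assms(1-4) by auto
  show "lex_less R (antidiag_monom (i, j) (k, l)) (diag_monom (i, j) (k, l))"
    "lex_less R (antidiag_monom (k, l) (p, q)) (diag_monom (k, l) (p, q))"
    using assms(7) disjoint lead_monom_f_minor[OF assms(5), where 'k='k]
      lead_monom_f_minor[OF assms(6), where 'k='k] by fastforce+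
qed

end

locale shared_corner_intervals = cell_order +
  fixes i j k l p q :: int
  assumes i_k: "i < k" and j_l: "j < l" and k_p: "k < p" and l_q: "l < q"
    and inner_ab: "inner_interval P (i, j) (k, l)"
    and inner_b\<beta>: "inner_interval P (k, l) (p, q)"
    and diag_leading_ab: "lex_less R (antidiag_monom (i, j) (k, l)) (diag_monom (i, j) (k, l))"
    and diag_leading_b\<beta>: "lex_less R (antidiag_monom (k, l) (p, q)) (diag_monom (k, l) (p, q))"
begin

abbreviation "a \<equiv> (i, j)"
abbreviation "b \<equiv> (k, l)"
abbreviation "c \<equiv> (i, l)"
abbreviation "d \<equiv> (k, j)"
abbreviation "\<beta> \<equiv> (p, q)"
abbreviation "\<gamma> \<equiv> (k, q)"
abbreviation "\<delta> \<equiv> (p, l)"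
abbreviation "h \<equiv> (p, j)"
abbreviation "r \<equiv> (i, q)"

abbreviation S :: "'k::field mpoly" where
  "S \<equiv> spoly R (f_minor a b) (f_minor b \<beta>)"

lemma corners_in_vertices:
  "a \<in> vertices P" "c \<in> vertices P" "d \<in> vertices P"
  "\<beta> \<in> vertices P" "\<gamma> \<in> vertices P" "\<delta> \<in> vertices P"
  using inner_interval_corners[OF inner_ab] inner_interval_corners[OF inner_b\<beta>] by simp_all

lemma spoly_eq:
  "(S :: 'k::field mpoly) = Poly_Mapping.single (mon3 a \<gamma> \<delta>) 1 - Poly_Mapping.single (mon3 \<beta> d c) 1"
proof -
  have lead: "lead_monom R (f_minor a b :: 'k mpoly) = diag_monom a b"
    "lead_monom R (f_minor b \<beta> :: 'k mpoly) = diag_monom b \<beta>"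
    using lead_monom_f_minor[OF inner_ab, where 'k='k] lead_monom_f_minor[OF inner_b\<beta>, where 'k='k]
      diag_leading_ab diag_leading_b\<beta> lex_less_asym keys_diag_antidiag_monom[OF inner_ab]
      keys_diag_antidiag_monom[OF inner_b\<beta>] by metis+
  have ne: "diag_monom a b \<noteq> antidiag_monom a b" "diag_monom b \<beta> \<noteq> antidiag_monom b \<beta>"
    using diag_leading_ab diag_leading_b\<beta> lex_less_irrefl by metis+
  have coeff: "lead_coeff R (f_minor a b :: 'k mpoly) = 1"
    "lead_coeff R (f_minor b \<beta> :: 'k mpoly) = 1"
    unfolding lead_coeff_def lead unfolding f_minor_eq
    using ne by (simp_all add: lookup_minus lookup_single)
  have "diag_monom b \<beta> - diag_monom a b = mon1 \<beta>" "diag_monom a b - diag_monom b \<beta> = mon1 a"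
    using i_k j_l k_p l_q
    by (auto intro!: poly_mapping_eqI simp: lookup_minus lookup_add lookup_single when_def)
  then show ?thesis
    unfolding spoly_def lead coeff unfolding f_minor_eq
    by (simp add: right_diff_distrib mult_single mon3_def add_ac)
qed

lemma keys_spoly_monoms:
  "Poly_Mapping.keys (mon3 a \<gamma> \<delta>) \<subseteq> vertices P" "Poly_Mapping.keys (mon3 \<beta> d c) \<subseteq> vertices P"
  unfolding keys_mon3 using corners_in_vertices by simp_all

lemma spoly_monoms_neq: "mon3 a \<gamma> \<delta> \<noteq> mon3 \<beta> d c"
proof
  assume "mon3 a \<gamma> \<delta> = mon3 \<beta> d c"
  then have "Poly_Mapping.lookup (mon3 a \<gamma> \<delta>) a = Poly_Mapping.lookup (mon3 \<beta> d c) a"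
    by simp
  then show False
    using i_k j_l k_p l_q by (simp add: mon3_def lookup_add lookup_single when_def)
qed

lemma keys_spoly: "Poly_Mapping.keys (S :: 'k::field mpoly) = {mon3 a \<gamma> \<delta>, mon3 \<beta> d c}"
  unfolding spoly_eq using spoly_monoms_neq by (rule keys_binomial)

lemma poly_in_spoly: "poly_in (vertices P) (S :: 'k::field mpoly)"
  unfolding poly_in_def keys_spoly using keys_spoly_monoms by blast

lemma spoly_neq_zero: "(S :: 'k::field mpoly) \<noteq> 0"
proof
  assume "(S :: 'k mpoly) = 0"
  then have "Poly_Mapping.keys (S :: 'k mpoly) = {}"
    by simp
  then show False
    unfolding keys_spoly by simp
qed

lemma lead_monom_spoly_of_less:
  assumes "lex_less R (mon3 a \<gamma> \<delta>) (mon3 \<beta> d c)"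
  shows "lead_monom R (S :: 'k::field mpoly) = mon3 \<beta> d c"
  by (rule lead_monom_eqI[OF poly_in_spoly]) (use assms in \<open>auto simp: keys_spoly\<close>)

lemma lead_monom_spoly_of_greater:
  assumes "lex_less R (mon3 \<beta> d c) (mon3 a \<gamma> \<delta>)"
  shows "lead_monom R (S :: 'k::field mpoly) = mon3 a \<gamma> \<delta>"
  by (rule lead_monom_eqI[OF poly_in_spoly]) (use assms in \<open>auto simp: keys_spoly\<close>)

lemma spoly_monoms_lex_le_lead_monom:
  "lex_le R (mon3 a \<gamma> \<delta>) (lead_monom R (S :: 'k::field mpoly))"
  "lex_le R (mon3 \<beta> d c) (lead_monom R (S :: 'k::field mpoly))"
proof -
  have "mon3 a \<gamma> \<delta> \<in> Poly_Mapping.keys (S :: 'k mpoly)"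
    "mon3 \<beta> d c \<in> Poly_Mapping.keys (S :: 'k mpoly)"
    by (simp_all add: keys_spoly)
  then show "lex_le R (mon3 a \<gamma> \<delta>) (lead_monom R (S :: 'k mpoly))"
    "lex_le R (mon3 \<beta> d c) (lead_monom R (S :: 'k mpoly))"
    using lead_monom_greatest(2)[OF poly_in_spoly spoly_neq_zero] by blast+
qed

lemma inner_interval_extensions:
  "inner_interval P d \<beta> \<longleftrightarrow> inner_interval P d \<delta>"
  "inner_interval P c \<beta> \<longleftrightarrow> inner_interval P c \<gamma>"
  "inner_interval P a \<gamma> \<longleftrightarrow> inner_interval P c \<gamma>"
  "inner_interval P a \<delta> \<longleftrightarrow> inner_interval P d \<delta>"
  using inner_interval_split_vertical[OF j_l l_q, of P k p]
    inner_interval_split_horizontal[OF i_k k_p, of P l q]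
    inner_interval_split_vertical[OF j_l l_q, of P i k]
    inner_interval_split_horizontal[OF i_k k_p, of P j l]
    inner_ab inner_b\<beta> by blast+

lemma spoly_reduces_via_a\<delta>_d\<beta>:
  assumes "inner_interval P a \<delta>" "inner_interval P d \<beta>"
    and "lex_le R (mon3 c h \<gamma>) (lead_monom R (S :: 'k::field mpoly))"
  shows "reduces_to_zero (vertices P) R (inner_minors P) (S :: 'k mpoly)"
proof (rule reduces_to_zero_var_minors[OF _ assms(1,2)])
  show "(S :: 'k mpoly) = var \<gamma> * f_minor a \<delta> - var c * f_minor d \<beta>"
    unfolding spoly_eq unfolding var_mult_var_var[symmetric] f_minor_def
    by (simp add: algebra_simps)
  show "\<gamma> \<in> vertices P" "c \<in> vertices P"
    using corners_in_vertices by simp_all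
  show "lex_le R n (lead_monom R (S :: 'k mpoly))"
    if "n \<in> {mon1 \<gamma> + diag_monom a \<delta>, mon1 \<gamma> + antidiag_monom a \<delta>,
      mon1 c + diag_monom d \<beta>, mon1 c + antidiag_monom d \<beta>}" for n
    using that assms(3) spoly_monoms_lex_le_lead_monom by (auto simp: mon3_def add_ac)
qed

lemma spoly_reduces_via_a\<gamma>_c\<beta>:
  assumes "inner_interval P a \<gamma>" "inner_interval P c \<beta>"
    and "lex_le R (mon3 r d \<delta>) (lead_monom R (S :: 'k::field mpoly))"
  shows "reduces_to_zero (vertices P) R (inner_minors P) (S :: 'k mpoly)"
proof (rule reduces_to_zero_var_minors[OF _ assms(1,2)])
  show "(S :: 'k mpoly) = var \<delta> * f_minor a \<gamma> - var d * f_minor c \<beta>"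
    unfolding spoly_eq unfolding var_mult_var_var[symmetric] f_minor_def
    by (simp add: algebra_simps)
  show "\<delta> \<in> vertices P" "d \<in> vertices P"
    using corners_in_vertices by simp_all
  show "lex_le R n (lead_monom R (S :: 'k mpoly))"
    if "n \<in> {mon1 \<delta> + diag_monom a \<gamma>, mon1 \<delta> + antidiag_monom a \<gamma>,
      mon1 d + diag_monom c \<beta>, mon1 d + antidiag_monom c \<beta>}" for n
    using that assms(3) spoly_monoms_lex_le_lead_monom by (auto simp: mon3_def add_ac)
qed

lemma spoly_reduces_imp_of_less:
  assumes less: "lex_less R (mon3 a \<gamma> \<delta>) (mon3 \<beta> d c)"
    and red: "reduces_to_zero (vertices P) R (inner_minors P) (S :: 'k::field mpoly)"
  shows "inner_diag_leading P R d \<beta> \<or> inner_diag_leading P R c \<beta>"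
proof -
  obtain s t m where st: "inner_interval P s t"
    "lead_monom R (S :: 'k mpoly) = m + lead_monom R (f_minor s t :: 'k mpoly)"
    by (rule lead_monom_dvd_of_reduces_to_zero[OF red spoly_neq_zero poly_in_spoly])
  have proper: "fst s < fst t" "snd s < snd t"
    using st(1) unfolding inner_interval_iff by simp_all
  from lead_monom_f_minor[OF st(1), where 'k='k] show ?thesis
  proof
    assume diag: "lex_less R (antidiag_monom s t) (diag_monom s t) \<and>
      lead_monom R (f_minor s t :: 'k mpoly) = diag_monom s t"
    then have "mon3 \<beta> d c = m + mon1 s + mon1 t"
      using st(2) lead_monom_spoly_of_less[OF less, where 'k='k] by (simp add: add.assoc)
    then have "s \<in> {\<beta>, d, c}" "t \<in> {\<beta>, d, c}"
      by (rule mon3_divisor_vars)+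
    then have "(s, t) = (d, \<beta>) \<or> (s, t) = (c, \<beta>)"
      using proper i_k j_l k_p l_q by auto
    then show ?thesis
      using diag st(1) unfolding inner_diag_leading_def by auto
  next
    assume antidiag: "lex_less R (diag_monom s t) (antidiag_monom s t) \<and>
      lead_monom R (f_minor s t :: 'k mpoly) = antidiag_monom s t"
    then have "mon3 \<beta> d c = m + mon1 (fst s, snd t) + mon1 (fst t, snd s)"
      using st(2) lead_monom_spoly_of_less[OF less, where 'k='k] by (simp add: add.assoc)
    then have "(fst s, snd t) \<in> {\<beta>, d, c}" "(fst t, snd s) \<in> {\<beta>, d, c}"
      by (rule mon3_divisor_vars)+
    then have "(s, t) = (a, b)"
      using proper i_k j_l k_p l_q by (cases s, cases t) auto
    then show ?thesis
      using antidiag diag_leading_ab lex_less_asym keys_diag_antidiag_monom[OF inner_ab] by auto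
  qed
qed

lemma spoly_reduces_imp_of_greater:
  assumes greater: "lex_less R (mon3 \<beta> d c) (mon3 a \<gamma> \<delta>)"
    and red: "reduces_to_zero (vertices P) R (inner_minors P) (S :: 'k::field mpoly)"
  shows "inner_diag_leading P R a \<gamma> \<or> inner_diag_leading P R a \<delta>"
proof -
  obtain s t m where st: "inner_interval P s t"
    "lead_monom R (S :: 'k mpoly) = m + lead_monom R (f_minor s t :: 'k mpoly)"
    by (rule lead_monom_dvd_of_reduces_to_zero[OF red spoly_neq_zero poly_in_spoly])
  have proper: "fst s < fst t" "snd s < snd t"
    using st(1) unfolding inner_interval_iff by simp_all
  from lead_monom_f_minor[OF st(1), where 'k='k] show ?thesis
  proof
    assume diag: "lex_less R (antidiag_monom s t) (diag_monom s t) \<and>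
      lead_monom R (f_minor s t :: 'k mpoly) = diag_monom s t"
    then have "mon3 a \<gamma> \<delta> = m + mon1 s + mon1 t"
      using st(2) lead_monom_spoly_of_greater[OF greater, where 'k='k] by (simp add: add.assoc)
    then have "s \<in> {a, \<gamma>, \<delta>}" "t \<in> {a, \<gamma>, \<delta>}"
      by (rule mon3_divisor_vars)+
    then have "(s, t) = (a, \<gamma>) \<or> (s, t) = (a, \<delta>)"
      using proper i_k j_l k_p l_q by auto
    then show ?thesis
      using diag st(1) unfolding inner_diag_leading_def by auto
  next
    assume antidiag: "lex_less R (diag_monom s t) (antidiag_monom s t) \<and>
      lead_monom R (f_minor s t :: 'k mpoly) = antidiag_monom s t"
    then have "mon3 a \<gamma> \<delta> = m + mon1 (fst s, snd t) + mon1 (fst t, snd s)"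
      using st(2) lead_monom_spoly_of_greater[OF greater, where 'k='k] by (simp add: add.assoc)
    then have "(fst s, snd t) \<in> {a, \<gamma>, \<delta>}" "(fst t, snd s) \<in> {a, \<gamma>, \<delta>}"
      by (rule mon3_divisor_vars)+
    then have "(s, t) = (b, \<beta>)"
      using proper i_k j_l k_p l_q by (cases s, cases t) auto
    then show ?thesis
      using antidiag diag_leading_b\<beta> lex_less_asym keys_diag_antidiag_monom[OF inner_b\<beta>] by auto
  qed
qed

lemma spoly_reduces_iff_of_less:
  assumes less: "lex_less R (mon3 a \<gamma> \<delta>) (mon3 \<beta> d c)"
  shows "reduces_to_zero (vertices P) R (inner_minors P) (S :: 'k::field mpoly) \<longleftrightarrow>
    inner_diag_leading P R d \<beta> \<or> inner_diag_leading P R c \<beta>"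
proof
  assume "inner_diag_leading P R d \<beta> \<or> inner_diag_leading P R c \<beta>"
  then show "reduces_to_zero (vertices P) R (inner_minors P) (S :: 'k mpoly)"
  proof
    assume d\<beta>: "inner_diag_leading P R d \<beta>"
    then have "lex_less R (mon1 c + antidiag_monom d \<beta>) (mon1 c + diag_monom d \<beta>)"
      unfolding inner_diag_leading_def by (blast intro: lex_less_add_left)
    then have "lex_le R (mon3 c h \<gamma>) (lead_monom R (S :: 'k mpoly))"
      unfolding lead_monom_spoly_of_less[OF less] lex_le_def by (simp add: mon3_def add_ac)
    then show ?thesis
      using d\<beta> inner_interval_extensions(1,4) unfolding inner_diag_leading_def
      by (blast intro: spoly_reduces_via_a\<delta>_d\<beta>)
  next
    assume c\<beta>: "inner_diag_leading P R c \<beta>"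
    then have "lex_less R (mon1 d + antidiag_monom c \<beta>) (mon1 d + diag_monom c \<beta>)"
      unfolding inner_diag_leading_def by (blast intro: lex_less_add_left)
    then have "lex_le R (mon3 r d \<delta>) (lead_monom R (S :: 'k mpoly))"
      unfolding lead_monom_spoly_of_less[OF less] lex_le_def by (simp add: mon3_def add_ac)
    then show ?thesis
      using c\<beta> inner_interval_extensions(2,3) unfolding inner_diag_leading_def
      by (blast intro: spoly_reduces_via_a\<gamma>_c\<beta>)
  qed
qed (rule spoly_reduces_imp_of_less[OF less])

lemma spoly_reduces_iff_of_greater:
  assumes greater: "lex_less R (mon3 \<beta> d c) (mon3 a \<gamma> \<delta>)"
  shows "reduces_to_zero (vertices P) R (inner_minors P) (S :: 'k::field mpoly) \<longleftrightarrow>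
    inner_diag_leading P R a \<gamma> \<or> inner_diag_leading P R a \<delta>"
proof
  assume "inner_diag_leading P R a \<gamma> \<or> inner_diag_leading P R a \<delta>"
  then show "reduces_to_zero (vertices P) R (inner_minors P) (S :: 'k mpoly)"
  proof
    assume a\<gamma>: "inner_diag_leading P R a \<gamma>"
    then have "lex_less R (mon1 \<delta> + antidiag_monom a \<gamma>) (mon1 \<delta> + diag_monom a \<gamma>)"
      unfolding inner_diag_leading_def by (blast intro: lex_less_add_left)
    then have "lex_le R (mon3 r d \<delta>) (lead_monom R (S :: 'k mpoly))"
      unfolding lead_monom_spoly_of_greater[OF greater] lex_le_def by (simp add: mon3_def add_ac)
    then show ?thesis
      using a\<gamma> inner_interval_extensions(2,3) unfolding inner_diag_leading_def
      by (blast intro: spoly_reduces_via_a\<gamma>_c\<beta>)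
  next
    assume a\<delta>: "inner_diag_leading P R a \<delta>"
    then have "lex_less R (mon1 \<gamma> + antidiag_monom a \<delta>) (mon1 \<gamma> + diag_monom a \<delta>)"
      unfolding inner_diag_leading_def by (blast intro: lex_less_add_left)
    then have "lex_le R (mon3 c h \<gamma>) (lead_monom R (S :: 'k mpoly))"
      unfolding lead_monom_spoly_of_greater[OF greater] lex_le_def by (simp add: mon3_def add_ac)
    then show ?thesis
      using a\<delta> inner_interval_extensions(1,4) unfolding inner_diag_leading_def
      by (blast intro: spoly_reduces_via_a\<delta>_d\<beta>)
  qed
qed (rule spoly_reduces_imp_of_greater[OF greater])

lemma inner_diag_leading_corner_iffs:
  "inner_diag_leading P R d \<beta> \<longleftrightarrow>
    inner_interval P d \<delta> \<and> (((h, \<beta>) \<in> R \<and> (\<gamma>, \<beta>) \<in> R) \<or> ((h, d) \<in> R \<and> (\<gamma>, d) \<in> R))"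
  "inner_diag_leading P R c \<beta> \<longleftrightarrow>
    inner_interval P c \<gamma> \<and> (((r, \<beta>) \<in> R \<and> (\<delta>, \<beta>) \<in> R) \<or> ((r, c) \<in> R \<and> (\<delta>, c) \<in> R))"
  "inner_diag_leading P R a \<gamma> \<longleftrightarrow>
    inner_interval P c \<gamma> \<and> (((r, a) \<in> R \<and> (d, a) \<in> R) \<or> ((r, \<gamma>) \<in> R \<and> (d, \<gamma>) \<in> R))"
  "inner_diag_leading P R a \<delta> \<longleftrightarrow>
    inner_interval P d \<delta> \<and> (((c, a) \<in> R \<and> (h, a) \<in> R) \<or> ((c, \<delta>) \<in> R \<and> (h, \<delta>) \<in> R))"
  unfolding inner_diag_leading_iff inner_interval_extensions by auto

end

lemma cell_order_of_P_order: "P_order P R \<Longrightarrow> cell_order P R"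
  unfolding P_order_def cell_order_def vertex_order_def by blast

theorem mainTheorem6:
  fixes P :: "vertex set set" and R :: "(vertex \<times> vertex) set"
    and i j k l p q :: int
  assumes "collection_of_cells P"
    and "i < k" and "j < l" and "p > k" and "q > l"
    and "inner_interval P (i, j) (k, l)"
    and "inner_interval P (k, l) (p, q)"
    and "P_order P R"
    and "Poly_Mapping.keys (lead_monom R (f_minor (i, j) (k, l) :: ('k::field) mpoly))
         \<inter> Poly_Mapping.keys (lead_monom R (f_minor (k, l) (p, q) :: 'k mpoly)) \<noteq> {}"
  shows "reduces_to_zero (vertices P) R (inner_minors P)
           (spoly R (f_minor (i, j) (k, l)) (f_minor (k, l) (p, q)) :: 'k mpoly)
    \<longleftrightarrow>
     (let a = (i, j); b = (k, l); \<alpha> = b; \<beta> = (p, q);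
          c = (i, l); d = (k, j); \<gamma> = (k, q); \<delta> = (p, l); h = (p, j); r = (i, q)
      in
      (lex_less R (mon3 a \<gamma> \<delta>) (mon3 \<beta> d c) \<and> inner_interval P d \<delta> \<and>
         (((h, \<beta>) \<in> R \<and> (\<gamma>, \<beta>) \<in> R) \<or> ((h, d) \<in> R \<and> (\<gamma>, d) \<in> R)))
    \<or> (lex_less R (mon3 a \<gamma> \<delta>) (mon3 \<beta> d c) \<and> inner_interval P c \<gamma> \<and>
         (((r, \<beta>) \<in> R \<and> (\<delta>, \<beta>) \<in> R) \<or> ((r, c) \<in> R \<and> (\<delta>, c) \<in> R)))
    \<or> (lex_less R (mon3 \<beta> d c) (mon3 a \<gamma> \<delta>) \<and> inner_interval P c \<gamma> \<and>
         (((r, a) \<in> R \<and> (d, a) \<in> R) \<or> ((r, \<gamma>) \<in> R \<and> (d, \<gamma>) \<in> R)))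
    \<or> (lex_less R (mon3 \<beta> d c) (mon3 a \<gamma> \<delta>) \<and> inner_interval P d \<delta> \<and>
         (((c, a) \<in> R \<and> (h, a) \<in> R) \<or> ((c, \<delta>) \<in> R \<and> (h, \<delta>) \<in> R))))"
proof -
  interpret cell_order P R
    using assms(8) by (rule cell_order_of_P_order)
  note diag_leading = diag_leading_of_not_coprime[OF assms(2-7) assms(9)]
  interpret shared_corner_intervals P R i j k l p q
    by unfold_locales (use assms(2-7) diag_leading in simp_all)
  consider (less) "lex_less R (mon3 a \<gamma> \<delta>) (mon3 \<beta> d c)"
    | (greater) "lex_less R (mon3 \<beta> d c) (mon3 a \<gamma> \<delta>)"
    using lex_less_total[OF keys_spoly_monoms spoly_monoms_neq] by blast
  then show ?thesis
  proof cases
    case less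
    then show ?thesis
      unfolding Let_def spoly_reduces_iff_of_less[OF less] inner_diag_leading_corner_iffs
      using lex_less_asym[OF keys_spoly_monoms] by blast
  next
    case greater
    then show ?thesis
      unfolding Let_def spoly_reduces_iff_of_greater[OF greater] inner_diag_leading_corner_iffs
      using lex_less_asym[OF keys_spoly_monoms(2,1)] by blast
  qed
qed

end
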